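(* Let $p,q,s$ be idempotents in a unital ring $A$ with $s\perp q$. If $\operatorname{sr}(pAq)=1$, then $\operatorname{sr}(pA(q+s))=1$.
   Context: Idempotents $e,f$ are orthogonal, $e\perp f$, if $ef=fe=0$ (so $q+s$ is an idempotent). For idempotents $p,q$ in a unital ring $A$, $\operatorname{sr}(pAq)=1$ means: whenever $a\in pAq$, $x\in qAp$, $b\in pAp$ satisfy $ax+b=p$, there exist $y\in pAq$, $z\in qAp$ with $(a+by)z=p$. *)

theory Defs
  imports Main
begin

definition idempotent :: "'a::ring_1 \<Rightarrow> bool" where
  "idempotent e \<longleftrightarrow> e * e = e"

definition orthogonal :: "'a::ring_1 \<Rightarrow> 'a \<Rightarrow> bool" where
  "orthogonal e f \<longleftrightarrow> e * f = 0 \<and> f * e = 0"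

definition corner :: "'a::ring_1 \<Rightarrow> 'a \<Rightarrow> 'a set" where
  "corner p q = {p * a * q | a. True}"

definition sr_one :: "'a::ring_1 \<Rightarrow> 'a \<Rightarrow> bool" where
  "sr_one p q \<longleftrightarrow>
     (\<forall>a\<in>corner p q. \<forall>x\<in>corner q p. \<forall>b\<in>corner p p.
        a * x + b = p \<longrightarrow>
        (\<exists>y\<in>corner p q. \<exists>z\<in>corner q p. (a + b * y) * z = p))"

end

theory Submission
  imports Defs
begin

text \<open>Put \<open>r = q + s\<close>. An instance \<open>a x + b = p\<close> over \<open>pAr\<close> is cut down to one over \<open>pAq\<close>
  by splitting \<open>a x = (a q)(q x) + a s x\<close> and absorbing \<open>a s x\<close> into \<open>b\<close>. A solution \<open>y, z\<close> of the
  cut-down instance lifts: \<open>y\<close> still lies in \<open>pAr\<close>, and \<open>z + s x y z\<close> lies in \<open>rAp\<close> and solves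
  the original instance, because \<open>y s = 0\<close> and \<open>a z = a q z\<close>.\<close>

lemma idempotent_add_orthogonal:
  fixes q s :: "'a::ring_1"
  assumes "idempotent q" "idempotent s" "orthogonal s q"
  shows "idempotent (q + s)"
  using assms by (simp add: idempotent_def orthogonal_def algebra_simps)

lemma mem_corner_iff:
  fixes p q c :: "'a::ring_1"
  assumes "idempotent p" "idempotent q"
  shows "c \<in> corner p q \<longleftrightarrow> p * c = c \<and> c * q = c"
proof
  assume "c \<in> corner p q"
  then obtain a where "c = p * a * q" by (auto simp: corner_def)
  with assms show "p * c = c \<and> c * q = c"
    by (simp add: idempotent_def flip: mult.assoc) (simp add: mult.assoc)
next
  assume "p * c = c \<and> c * q = c"
  then have "c = p * c * q" by simp
  then show "c \<in> corner p q" by (auto simp: corner_def)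
qed

lemma corner_mono_right:
  fixes p q r :: "'a::ring_1"
  assumes "q * r = q"
  shows "corner p q \<subseteq> corner p r"
proof
  fix c assume "c \<in> corner p q"
  then obtain a where "c = p * a * q" by (auto simp: corner_def)
  then have "c = p * (a * q) * r" by (simp add: assms mult.assoc)
  then show "c \<in> corner p r" by (auto simp: corner_def)
qed

lemma lifted_solution_eq:
  fixes a b x y z q s :: "'a::ring_1"
  assumes "q * z = z" "y * s = 0"
  shows "(a + b * y) * (z + s * x * y * z) = (a * q + (b + a * s * x) * y) * z"
proof -
  have "(a + b * y) * (z + s * x * y * z)
      = a * (q * z) + a * s * x * y * z + b * y * z + b * (y * s) * x * y * z"
    by (simp add: assms(1) algebra_simps)
  also have "\<dots> = (a * q + (b + a * s * x) * y) * z"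
    by (simp add: assms(2) algebra_simps)
  finally show ?thesis .
qed

lemma sr_one_instance_restrict:
  fixes p q s a b x :: "'a::ring_1"
  assumes ip: "idempotent p" and iq: "idempotent q" and iz: "idempotent s"
    and sq: "orthogonal s q"
    and a: "a \<in> corner p (q + s)" and x: "x \<in> corner (q + s) p" and b: "b \<in> corner p p"
    and eq: "a * x + b = p"
  shows "a * q \<in> corner p q" "q * x \<in> corner q p" "b + a * s * x \<in> corner p p"
    and "(a * q) * (q * x) + (b + a * s * x) = p"
proof -
  have ir: "idempotent (q + s)" using iq iz sq by (rule idempotent_add_orthogonal)
  have qq: "q * q = q" using iq by (simp add: idempotent_def)
  have pa: "p * a = a" and ar: "a * (q + s) = a" and rx: "(q + s) * x = x" and xp: "x * p = x"
    and pb: "p * b = b" and bp: "b * p = b"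
    using a x b ip iq ir by (simp_all add: mem_corner_iff)
  have "p * (a * q) = a * q" "a * q * q = a * q"
    by (simp_all add: pa flip: mult.assoc) (simp add: qq mult.assoc)
  then show "a * q \<in> corner p q" using ip iq by (simp add: mem_corner_iff)
  have "q * (q * x) = q * x" "q * x * p = q * x"
    by (simp_all add: qq flip: mult.assoc) (simp add: xp mult.assoc)
  then show "q * x \<in> corner q p" using ip iq by (simp add: mem_corner_iff)
  have "p * (b + a * s * x) = b + a * s * x"
    by (simp add: distrib_left pb flip: mult.assoc) (simp add: pa)
  moreover have "(b + a * s * x) * p = b + a * s * x"
    by (simp add: distrib_right bp mult.assoc xp)
  ultimately show "b + a * s * x \<in> corner p p" using ip by (simp add: mem_corner_iff)
  have "a * x = a * q * (q * x) + a * s * x"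
    by (metis ar rx distrib_left distrib_right mult.assoc qq)
  then show "(a * q) * (q * x) + (b + a * s * x) = p" using eq by (simp add: add_ac)
qed

lemma sr_one_solution_lift:
  fixes p q s a b x y z :: "'a::ring_1"
  assumes ip: "idempotent p" and iq: "idempotent q" and iz: "idempotent s"
    and sq: "orthogonal s q"
    and y: "y \<in> corner p q" and z: "z \<in> corner q p"
    and eq: "(a * q + (b + a * s * x) * y) * z = p"
  shows "y \<in> corner p (q + s)" "z + s * x * y * z \<in> corner (q + s) p"
    and "(a + b * y) * (z + s * x * y * z) = p"
proof -
  have ir: "idempotent (q + s)" using iq iz sq by (rule idempotent_add_orthogonal)
  have qr: "q * (q + s) = q" and rq: "(q + s) * q = q" and rs: "(q + s) * s = s"
    using iq iz sq by (simp_all add: idempotent_def orthogonal_def algebra_simps)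
  have yq: "y * q = y" and qz: "q * z = z" and zp: "z * p = z"
    using y z ip iq by (simp_all add: mem_corner_iff)
  show "y \<in> corner p (q + s)" using y corner_mono_right[OF qr] by blast
  have "(q + s) * (z + s * x * y * z) = z + s * x * y * z"
    by (simp add: distrib_left rs flip: mult.assoc) (metis qz rq mult.assoc)
  moreover have "(z + s * x * y * z) * p = z + s * x * y * z"
    by (simp add: distrib_right zp mult.assoc)
  ultimately show "z + s * x * y * z \<in> corner (q + s) p" using ir ip by (simp add: mem_corner_iff)
  have "y * s = 0" using sq by (metis yq orthogonal_def mult.assoc mult_zero_right)
  with qz eq show "(a + b * y) * (z + s * x * y * z) = p" by (simp add: lifted_solution_eq)
qed

theorem lemma3:
  fixes p q s :: "'a::ring_1"
  assumes "idempotent p" and "idempotent q" and "idempotent s"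
    and "orthogonal s q"
    and "sr_one p q"
  shows "sr_one p (q + s)"
  unfolding sr_one_def
proof (intro ballI impI)
  fix a x b
  assume "a \<in> corner p (q + s)" "x \<in> corner (q + s) p" "b \<in> corner p p" "a * x + b = p"
  from sr_one_instance_restrict[OF assms(1-4) this] assms(5)
  obtain y z where "y \<in> corner p q" "z \<in> corner q p"
    and "(a * q + (b + a * s * x) * y) * z = p"
    unfolding sr_one_def by blast
  from sr_one_solution_lift[OF assms(1-4) this]
  show "\<exists>y\<in>corner p (q + s). \<exists>z\<in>corner (q + s) p. (a + b * y) * z = p"
    by blast
qed

end
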